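(* If $L:\mathbb{R}^d\setminus\{0\}\to\mathbb{R}$ is $C^2$ and scale invariant, then $$\sup_{x,x'\neq0}\big(L(x)-L(x')\big)\le\frac{\pi^2}{2}\sup_{\|y\|_2=1}\|\nabla^2L(y)\|_2 .$$
   Context: Scale invariant means $L(cx)=L(x)$ for all $c>0$, $x\neq0$. $\|\cdot\|_2$ on matrices is the spectral norm. *)

theory Defs
  imports "HOL-Analysis.Analysis"
begin

definition scale_invariant :: "(real^'n \<Rightarrow> real) \<Rightarrow> bool" where
  "scale_invariant L \<longleftrightarrow> (\<forall>c x. c > 0 \<longrightarrow> x \<noteq> 0 \<longrightarrow> L (c *\<^sub>R x) = L x)"

definition C2_with_hessian ::
  "(real^'n) set \<Rightarrow> (real^'n \<Rightarrow> real) \<Rightarrow> (real^'n \<Rightarrow> real^'n^'n) \<Rightarrow> bool" where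
  "C2_with_hessian S L H \<longleftrightarrow> open S \<and>
     (\<exists>g. \<forall>x\<in>S. (L has_derivative (\<lambda>h. g x \<bullet> h)) (at x) \<and>
                 (g has_derivative (\<lambda>h. H x *v h)) (at x)) \<and>
     continuous_on S H"

definition spectral_norm :: "real^'n^'n \<Rightarrow> real" where
  "spectral_norm A = onorm (\<lambda>h. A *v h)"

end

theory Submission imports Defs begin

text \<open>By scale invariance it suffices to compare values on the unit sphere, and there we may
  compare against a maximiser \<open>x\<close> of \<open>L\<close>. Join \<open>x\<close> to any other unit vector by a great-circle
  arc of length \<open>\<theta> \<le> pi\<close>. Along the arc, \<open>f = L \<circ> \<gamma>\<close> has \<open>f'(0) = 0\<close> because \<open>x\<close> is a maximum,
  and \<open>f'' = \<gamma>'\<^sup>T \<nabla>\<^sup>2L \<gamma>' - \<nabla>L \<cdot> \<gamma>\<close>, where the last term vanishes by Euler's identity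
  \<open>\<nabla>L(y) \<cdot> y = 0\<close> for scale-invariant \<open>L\<close>. Hence \<open>f'' \<ge> -M\<close> with \<open>M\<close> the supremum of the spectral
  norm of the Hessian on the sphere, and Taylor's bound gives \<open>f(0) - f(\<theta>) \<le> M \<theta>\<^sup>2 / 2\<close>.\<close>

lemma has_real_derivative_gradient_chain:
  fixes \<gamma> :: "real \<Rightarrow> 'a::real_inner"
  assumes "(\<gamma> has_vector_derivative d) (at t)"
    and "(F has_derivative (\<lambda>h. G \<bullet> h)) (at (\<gamma> t))"
  shows "((\<lambda>s. F (\<gamma> s)) has_real_derivative (G \<bullet> d)) (at t)"
proof -
  have "((\<lambda>s. F (\<gamma> s)) has_derivative (\<lambda>h. G \<bullet> (h *\<^sub>R d))) (at t)"
    using has_derivative_compose[OF assms(1)[unfolded has_vector_derivative_def] assms(2)] .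
  moreover have "(\<lambda>h. G \<bullet> (h *\<^sub>R d)) = (*) (G \<bullet> d)" by (auto simp: fun_eq_iff)
  ultimately show ?thesis unfolding has_field_derivative_def by simp
qed

lemma has_vector_derivative_matrix_chain:
  fixes \<gamma> :: "real \<Rightarrow> real^'n"
  assumes "(\<gamma> has_vector_derivative d) (at t)"
    and "(g has_derivative (\<lambda>h. A *v h)) (at (\<gamma> t))"
  shows "((\<lambda>s. g (\<gamma> s)) has_vector_derivative (A *v d)) (at t)"
proof -
  have "((\<lambda>s. g (\<gamma> s)) has_derivative (\<lambda>h. A *v (h *\<^sub>R d))) (at t)"
    using has_derivative_compose[OF assms(1)[unfolded has_vector_derivative_def] assms(2)] .
  then show ?thesis
    unfolding has_vector_derivative_def by (simp add: matrix_vector_mult_scaleR)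
qed

lemma has_real_derivative_inner_vector:
  fixes f g :: "real \<Rightarrow> 'a::real_inner"
  assumes "(f has_vector_derivative f') (at t)" and "(g has_vector_derivative g') (at t)"
  shows "((\<lambda>s. f s \<bullet> g s) has_real_derivative f t \<bullet> g' + f' \<bullet> g t) (at t)"
proof -
  have "((\<lambda>s. f s \<bullet> g s) has_derivative (\<lambda>h. f t \<bullet> (h *\<^sub>R g') + (h *\<^sub>R f') \<bullet> g t)) (at t)"
    using has_derivative_inner[OF assms[unfolded has_vector_derivative_def]] .
  moreover have "(\<lambda>h. f t \<bullet> (h *\<^sub>R g') + (h *\<^sub>R f') \<bullet> g t) = (*) (f t \<bullet> g' + f' \<bullet> g t)"
    by (auto simp: fun_eq_iff algebra_simps)
  ultimately show ?thesis unfolding has_field_derivative_def by simp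
qed

lemma spectral_norm_nonneg: "0 \<le> spectral_norm A"
  unfolding spectral_norm_def by (rule onorm_pos_le[OF matrix_vector_mul_bounded_linear])

lemma quadratic_form_le_spectral_norm:
  fixes A :: "real^'n^'n"
  shows "\<bar>d \<bullet> (A *v d)\<bar> \<le> spectral_norm A * (norm d)\<^sup>2"
proof -
  have "\<bar>d \<bullet> (A *v d)\<bar> \<le> norm d * norm (A *v d)" by (rule Cauchy_Schwarz_ineq2)
  also have "\<dots> \<le> norm d * (spectral_norm A * norm d)"
    unfolding spectral_norm_def
    by (rule mult_left_mono[OF onorm[OF matrix_vector_mul_bounded_linear]]) simp
  finally show ?thesis by (simp add: power2_eq_square mult_ac)
qed

lemma bdd_above_spectral_norm_compact:
  fixes H :: "real^'n \<Rightarrow> real^'n^'n"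
  assumes "compact S" and "continuous_on S H"
  shows "bdd_above ((\<lambda>y. spectral_norm (H y)) ` S)"
proof -
  obtain K where K: "\<And>y. y \<in> S \<Longrightarrow> norm (H y) \<le> K"
    using compact_imp_bounded[OF compact_continuous_image[OF assms(2,1)]]
    unfolding bounded_iff by blast
  have "spectral_norm (H y) \<le> real CARD('n) * real CARD('n) * K" if "y \<in> S" for y
    unfolding spectral_norm_def
  proof (rule onorm_le_matrix_component)
    fix i j
    have "\<bar>H y $ i $ j\<bar> \<le> norm (H y $ i)" by (rule component_le_norm_cart)
    also have "\<dots> \<le> norm (H y)" by (rule Finite_Cartesian_Product.norm_nth_le)
    finally show "\<bar>H y $ i $ j\<bar> \<le> K" using K[OF that] by linarith
  qed
  then show ?thesis by (intro bdd_aboveI2)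
qed

lemma scale_invariant_gradient_orthogonal:
  fixes L :: "real^'n \<Rightarrow> real"
  assumes "scale_invariant L" and "y \<noteq> 0"
    and "(L has_derivative (\<lambda>h. G \<bullet> h)) (at y)"
  shows "G \<bullet> y = 0"
proof -
  have "((\<lambda>c::real. c *\<^sub>R y) has_vector_derivative y) (at 1)"
    by (auto intro!: derivative_eq_intros)
  from has_real_derivative_gradient_chain[OF this] assms(3)
  have "((\<lambda>c. L (c *\<^sub>R y)) has_real_derivative (G \<bullet> y)) (at 1)" by simp
  then show ?thesis
  proof (rule DERIV_local_max)
    have "L (c *\<^sub>R y) = L y" if "\<bar>1 - c\<bar> < 1/2" for c
    proof -
      have "0 < c" using that by linarith
      then show ?thesis using assms(1,2) unfolding scale_invariant_def by blast
    qed
    then show "\<forall>c. \<bar>1 - c\<bar> < 1/2 \<longrightarrow> L (c *\<^sub>R y) \<le> L (1 *\<^sub>R y)" by simp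
  qed simp
qed

lemma scale_invariant_normalize:
  assumes "scale_invariant L" and "x \<noteq> 0"
  shows "L (x /\<^sub>R norm x) = L x"
  using assms unfolding scale_invariant_def by simp

lemma norm_orthonormal_combination:
  fixes x v :: "'a::real_inner"
  assumes "norm x = 1" "norm v = 1" "v \<bullet> x = 0"
  shows "norm (a *\<^sub>R x + b *\<^sub>R v) = sqrt (a\<^sup>2 + b\<^sup>2)"
proof -
  have "x \<bullet> x = 1" "v \<bullet> v = 1" using assms(1,2) by (simp_all add: dot_square_norm)
  then have "(norm (a *\<^sub>R x + b *\<^sub>R v))\<^sup>2 = a\<^sup>2 + b\<^sup>2"
    unfolding power2_norm_eq_inner using assms(3)
    by (simp add: inner_add_left inner_add_right inner_commute[of x v] power2_eq_square)
  then show ?thesis by (metis norm_ge_zero real_sqrt_unique)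
qed

lemma sphere_great_circle:
  fixes x w :: "real^'n"
  assumes "CARD('n) \<ge> 2" and "norm x = 1" and "norm w = 1"
  obtains v \<theta> where "norm v = 1" "v \<bullet> x = 0" "0 \<le> \<theta>" "\<theta> \<le> pi"
    "w = cos \<theta> *\<^sub>R x + sin \<theta> *\<^sub>R v"
proof -
  have xx: "x \<bullet> x = 1" using assms(2) by (simp add: dot_square_norm)
  define c where "c = w \<bullet> x"
  define r where "r = w - c *\<^sub>R x"
  have rx: "r \<bullet> x = 0" unfolding r_def c_def by (simp add: inner_diff_left xx)
  obtain v where v: "norm v = 1" "v \<bullet> x = 0" and w: "w = c *\<^sub>R x + norm r *\<^sub>R v"
  proof (cases "r = 0")
    case True
    have "2 \<le> DIM(real^'n)" using assms(1) by simp
    then obtain y where "y \<noteq> 0" "orthogonal x y" using orthogonal_to_vector_exists by blast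
    then show ?thesis
      using True by (intro that[of "y /\<^sub>R norm y"]) (auto simp: orthogonal_def inner_commute r_def)
  next
    case False
    then show ?thesis using rx by (intro that[of "r /\<^sub>R norm r"]) (auto simp: r_def)
  qed
  have "1 = c\<^sup>2 + (norm r)\<^sup>2"
    using norm_orthonormal_combination[OF assms(2) v(1,2), of c "norm r"] assms(3) w by simp
  then have r: "(norm r)\<^sup>2 = 1 - c\<^sup>2" by simp
  then have c: "-1 \<le> c" "c \<le> 1" "norm r = sqrt (1 - c\<^sup>2)"
    using zero_le_power2[of "norm r"] abs_square_le_1[of c] real_sqrt_unique[OF r norm_ge_zero]
    by (auto simp: abs_le_iff)
  show ?thesis
  proof (rule that[OF v, of "arccos c"])
    show "0 \<le> arccos c" "arccos c \<le> pi" using c by (auto intro: arccos_lbound arccos_ubound)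
    show "w = cos (arccos c) *\<^sub>R x + sin (arccos c) *\<^sub>R v" using w c by (simp add: sin_arccos)
  qed
qed

lemma taylor_lower_bound_at_critical_point:
  fixes f f' f'' :: "real \<Rightarrow> real"
  assumes f: "\<And>t. (f has_real_derivative f' t) (at t)"
    and f': "\<And>t. (f' has_real_derivative f'' t) (at t)"
    and "f' 0 = 0" and f''_ge: "\<And>t. f'' t \<ge> - M" and "0 \<le> \<theta>"
  shows "f 0 - f \<theta> \<le> M * \<theta>\<^sup>2 / 2"
proof -
  have f'_ge: "f' t \<ge> - M * t" if t: "0 < t" for t
  proof -
    obtain z where "f' t - f' 0 = (t - 0) * f'' z" using MVT2[OF t f'] by blast
    then have "f' t = t * f'' z" using \<open>f' 0 = 0\<close> by simp
    moreover have "t * - M \<le> t * f'' z" using f''_ge t by (intro mult_left_mono) auto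
    ultimately show ?thesis by (simp add: mult.commute)
  qed
  define h where "h t = f t + M * t\<^sup>2 / 2" for t
  have h: "(h has_real_derivative f' t + M * t) (at t)" for t
    unfolding h_def by (auto intro!: derivative_eq_intros f)
  have "h 0 \<le> h \<theta>"
  proof (cases "\<theta> = 0")
    case False
    then have "0 < \<theta>" using \<open>0 \<le> \<theta>\<close> by simp
    then obtain z where "0 < z" "h \<theta> - h 0 = (\<theta> - 0) * (f' z + M * z)"
      using MVT2[OF _ h] by blast
    moreover have "0 \<le> \<theta> * (f' z + M * z)"
      using f'_ge[of z] \<open>0 < z\<close> \<open>0 < \<theta>\<close> by simp
    ultimately show ?thesis by simp
  qed simp
  then show ?thesis unfolding h_def by simp
qed

lemma scale_invariant_great_circle_bound:
  fixes L :: "real^'n \<Rightarrow> real" and H :: "real^'n \<Rightarrow> real^'n^'n"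
  assumes scale: "scale_invariant L"
    and grad: "\<And>y. y \<noteq> 0 \<Longrightarrow> (L has_derivative (\<lambda>h. g y \<bullet> h)) (at y)"
    and hess: "\<And>y. y \<noteq> 0 \<Longrightarrow> (g has_derivative (\<lambda>h. H y *v h)) (at y)"
    and x: "norm x = 1" and v: "norm v = 1" "v \<bullet> x = 0"
    and max: "\<And>y. y \<in> sphere 0 1 \<Longrightarrow> L y \<le> L x"
    and M: "\<And>y. y \<in> sphere 0 1 \<Longrightarrow> spectral_norm (H y) \<le> M"
    and "0 \<le> \<theta>"
  shows "L x - L (cos \<theta> *\<^sub>R x + sin \<theta> *\<^sub>R v) \<le> M * \<theta>\<^sup>2 / 2"
proof -
  define \<gamma> where "\<gamma> t = cos t *\<^sub>R x + sin t *\<^sub>R v" for t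
  define \<delta> where "\<delta> t = - sin t *\<^sub>R x + cos t *\<^sub>R v" for t
  have on_sphere: "\<gamma> t \<in> sphere 0 1" "norm (\<delta> t) = 1" for t
    using norm_orthonormal_combination[OF x v, of "cos t" "sin t"]
      norm_orthonormal_combination[OF x v, of "- sin t" "cos t"]
    unfolding \<gamma>_def \<delta>_def by (simp_all add: add.commute)
  have nonzero: "\<gamma> t \<noteq> 0" for t using on_sphere(1)[of t] by auto
  have \<gamma>': "(\<gamma> has_vector_derivative \<delta> t) (at t)"
    and \<delta>': "(\<delta> has_vector_derivative - \<gamma> t) (at t)" for t
    unfolding \<gamma>_def \<delta>_def by (auto intro!: derivative_eq_intros)
  define f' where "f' t = g (\<gamma> t) \<bullet> \<delta> t" for t
  define f'' where "f'' t = \<delta> t \<bullet> (H (\<gamma> t) *v \<delta> t)" for t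
  have f: "((\<lambda>t. L (\<gamma> t)) has_real_derivative f' t) (at t)" for t
    unfolding f'_def using has_real_derivative_gradient_chain[OF \<gamma>' grad[OF nonzero]] .
  have f': "(f' has_real_derivative f'' t) (at t)" for t
  proof -
    have "(f' has_real_derivative g (\<gamma> t) \<bullet> - \<gamma> t + (H (\<gamma> t) *v \<delta> t) \<bullet> \<delta> t) (at t)"
      unfolding f'_def
      using has_real_derivative_inner_vector[OF has_vector_derivative_matrix_chain[OF \<gamma>' hess[OF nonzero]] \<delta>']
      by (simp add: inner_commute)
    moreover have "g (\<gamma> t) \<bullet> \<gamma> t = 0"
      by (rule scale_invariant_gradient_orthogonal[OF scale nonzero grad[OF nonzero]])
    ultimately show ?thesis by (simp add: f''_def inner_commute)
  qed
  have "f' 0 = 0"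
  proof (rule DERIV_local_max[OF f])
    have "\<gamma> 0 = x" by (simp add: \<gamma>_def)
    then show "\<forall>y. \<bar>0 - y\<bar> < 1 \<longrightarrow> L (\<gamma> y) \<le> L (\<gamma> 0)"
      using max on_sphere(1) by simp
  qed simp
  moreover have "f'' t \<ge> - M" for t
  proof -
    have "\<bar>f'' t\<bar> \<le> spectral_norm (H (\<gamma> t))"
      using quadratic_form_le_spectral_norm[of "\<delta> t" "H (\<gamma> t)"] on_sphere(2)
      by (simp add: f''_def)
    then show ?thesis using M[OF on_sphere(1)[of t]] by linarith
  qed
  ultimately show ?thesis
    using taylor_lower_bound_at_critical_point[OF f f' _ _ \<open>0 \<le> \<theta>\<close>] by (simp add: \<gamma>_def)
qed

theorem mainTheorem7:
  fixes L :: "real^'n \<Rightarrow> real" and H :: "real^'n \<Rightarrow> real^'n^'n"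
  assumes dim: "CARD('n) \<ge> 2"
    and C2: "C2_with_hessian (UNIV - {0}) L H"
    and scale: "scale_invariant L"
  shows "\<forall>x x'. x \<noteq> 0 \<longrightarrow> x' \<noteq> 0 \<longrightarrow>
           L x - L x' \<le> pi\<^sup>2 / 2 * (SUP y\<in>sphere 0 1. spectral_norm (H y))"
proof (intro allI impI)
  fix x x' :: "real^'n" assume "x \<noteq> 0" "x' \<noteq> 0"
  obtain g where grad: "\<And>y. y \<noteq> 0 \<Longrightarrow> (L has_derivative (\<lambda>h. g y \<bullet> h)) (at y)"
    and hess: "\<And>y. y \<noteq> 0 \<Longrightarrow> (g has_derivative (\<lambda>h. H y *v h)) (at y)"
    and "continuous_on (UNIV - {0}) H"
    using C2 unfolding C2_with_hessian_def by blast
  define M where "M = (SUP y\<in>sphere 0 1. spectral_norm (H y))"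
  have "continuous_on (sphere 0 1) H"
    using \<open>continuous_on (UNIV - {0}) H\<close> by (rule continuous_on_subset) auto
  then have M: "spectral_norm (H y) \<le> M" if "y \<in> sphere 0 1" for y
    unfolding M_def using that by (intro cSUP_upper bdd_above_spectral_norm_compact) auto
  have "continuous_on (sphere 0 1) L"
    by (intro continuous_at_imp_continuous_on ballI has_derivative_continuous[OF grad]) auto
  moreover have "sphere (0::real^'n) 1 \<noteq> {}" by simp
  ultimately obtain xm where xm: "xm \<in> sphere 0 1" and max: "\<And>y. y \<in> sphere 0 1 \<Longrightarrow> L y \<le> L xm"
    using continuous_attains_sup[OF compact_sphere] by blast
  have "norm xm = 1" "norm (x' /\<^sub>R norm x') = 1"
    using xm \<open>x' \<noteq> 0\<close> by simp_all
  then obtain v \<theta> where v: "norm v = 1" "v \<bullet> xm = 0" and "0 \<le> \<theta>" "\<theta> \<le> pi"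
    and x': "x' /\<^sub>R norm x' = cos \<theta> *\<^sub>R xm + sin \<theta> *\<^sub>R v"
    by (rule sphere_great_circle[OF dim])
  have "L x - L x' = L (x /\<^sub>R norm x) - L (x' /\<^sub>R norm x')"
    using scale_invariant_normalize[OF scale] \<open>x \<noteq> 0\<close> \<open>x' \<noteq> 0\<close> by simp
  also have "\<dots> \<le> L xm - L (cos \<theta> *\<^sub>R xm + sin \<theta> *\<^sub>R v)"
    using max[of "x /\<^sub>R norm x"] \<open>x \<noteq> 0\<close> x' by simp
  also have "\<dots> \<le> M * \<theta>\<^sup>2 / 2"
    by (rule scale_invariant_great_circle_bound[OF scale grad hess \<open>norm xm = 1\<close> v max M \<open>0 \<le> \<theta>\<close>])
  also have "\<dots> \<le> pi\<^sup>2 / 2 * M"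
    using M[OF xm] spectral_norm_nonneg[of "H xm"] \<open>0 \<le> \<theta>\<close> \<open>\<theta> \<le> pi\<close>
    by (simp add: mult_left_mono power_mono mult.commute)
  finally show "L x - L x' \<le> pi\<^sup>2 / 2 * (SUP y\<in>sphere 0 1. spectral_norm (H y))"
    unfolding M_def .
qed

end
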